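(* For every positive integer $r$, with $c_r=2^{r+1}-2$, $$S_r^*S_r=2^{r-2}\Big[J_{c_r,c_r}+I_{c_r/2}\otimes\begin{pmatrix}1&-1\\-1&1\end{pmatrix}\Big],$$ where $J_{x,y}$ denotes the $x\times y$ matrix all of whose entries equal $1$.
   Context: Define $\{0,1\}$-matrices $S_r$ recursively. Let $S_1=I_2$. For $r\ge1$ let $F_r=I_{2^r-1}\otimes\begin{pmatrix}0&1\\1&0\end{pmatrix}$, and let $1_r$, $0_r$ denote the $2^r\times1$ all-ones and all-zeros column vectors. For $r\ge2$ set $S_r=\big(B_r^{(i)}\ B_r^{(ii)}\ B_r^{(iii)}\big)$ (horizontal concatenation) with $$B_r^{(i)}=\begin{pmatrix}1_{r-1}&0_{r-1}\\0_{r-1}&1_{r-1}\end{pmatrix},\quad B_r^{(ii)}=\begin{pmatrix}S_{r-1}\\S_{r-1}\end{pmatrix},\quad B_r^{(iii)}=\begin{pmatrix}S_{r-1}\\S_{r-1}F_{r-1}\end{pmatrix}.$$ Then $S_r$ is a $2^r\times c_r$ matrix. *)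

theory Defs
  imports "Jordan_Normal_Form.Matrix"
begin

definition hcat :: "'a::zero mat \<Rightarrow> 'a mat \<Rightarrow> 'a mat" where
  "hcat A B = mat (dim_row A) (dim_col A + dim_col B)
     (\<lambda>(i,j). if j < dim_col A then A $$ (i,j) else B $$ (i, j - dim_col A))"

definition kron :: "'a::times mat \<Rightarrow> 'a mat \<Rightarrow> 'a mat" where
  "kron A B = mat (dim_row A * dim_row B) (dim_col A * dim_col B)
     (\<lambda>(i,j). A $$ (i div dim_row B, j div dim_col B) * B $$ (i mod dim_row B, j mod dim_col B))"

definition Jmat :: "nat \<Rightarrow> nat \<Rightarrow> real mat" where
  "Jmat x y = mat x y (\<lambda>_. 1)"

definition swap2 :: "real mat" where
  "swap2 = mat 2 2 (\<lambda>(i,j). if i = j then 0 else 1)"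

definition K2 :: "real mat" where
  "K2 = mat 2 2 (\<lambda>(i,j). if i = j then 1 else -1)"

definition Fm :: "nat \<Rightarrow> real mat" where
  "Fm r = kron (1\<^sub>m (2^r - 1)) swap2"

definition ones_col :: "nat \<Rightarrow> real mat" where
  "ones_col r = Jmat (2^r) 1"

definition zeros_col :: "nat \<Rightarrow> real mat" where
  "zeros_col r = 0\<^sub>m (2^r) 1"

(* S_r, defined for r \<ge> 1 (the value at r = 0 is irrelevant) *)
fun S :: "nat \<Rightarrow> real mat" where
  "S 0 = 1\<^sub>m 2"
| "S (Suc 0) = 1\<^sub>m 2"
| "S (Suc (Suc n)) =
     (let r' = Suc n;
          B1 = hcat (ones_col r') (zeros_col r') @\<^sub>r hcat (zeros_col r') (ones_col r');
          B2 = S r' @\<^sub>r S r';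
          B3 = S r' @\<^sub>r (S r' * Fm r')
      in hcat (hcat B1 B2) B3)"

end

(* The columns of S_r come in 2^r - 1 complementary pairs (2q, 2q+1): every column has
   2^(r-1) ones, paired columns are disjoint, and columns from different pairs meet in
   2^(r-2) rows.  This is proved by induction along the block recursion: the first two
   columns of S_(r+1) are the two halves of the rows, and every other column stacks a
   column a of S_r on top of a or, in the block S_r F_r, on top of its partner, since
   F_r swaps the columns of each pair. *)

theory Submission
  imports Defs
begin

definition partner :: "nat \<Rightarrow> nat" where
  "partner j = (if even j then Suc j else j - 1)"

lemma partner_partner [simp]: "partner (partner j) = j"
  unfolding partner_def by presburger

lemma partner_div2 [simp]: "partner j div 2 = j div 2"
  unfolding partner_def by presburger

lemma partner_neq: "partner j \<noteq> j"
  unfolding partner_def by presburger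

lemma partner_less: "j < 2 * q \<Longrightarrow> partner j < 2 * q"
  unfolding partner_def by presburger

lemma partner_eq: "partner j = 2 * (j div 2) + (1 - j mod 2)"
  unfolding partner_def by (cases "even j") (auto elim!: evenE oddE)

lemma div2_eq_iff: "i div 2 = j div 2 \<longleftrightarrow> i = j \<or> i = partner j"
  using div_mult_mod_eq[of i 2] div_mult_mod_eq[of j 2] mod_less_divisor[of 2 i] mod_less_divisor[of 2 j]
  unfolding partner_eq by linarith

lemma eq_partner_iff: "i = partner j \<longleftrightarrow> i div 2 = j div 2 \<and> i \<noteq> j"
  by (metis div2_eq_iff partner_div2 partner_neq)

definition ncols :: "nat \<Rightarrow> nat" where
  "ncols r = 2^(r+1) - 2"

lemma ncols_eq: "ncols r = 2 * (2^r - 1)"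
  unfolding ncols_def by (simp add: right_diff_distrib')

lemma ncols_Suc: "ncols (Suc r) = 2 + 2 * ncols r"
proof -
  have "(2::nat)^r \<ge> 1" by simp
  moreover have "4 * x - 2 = 2 + 2 * (2 * x - 2)" if "x \<ge> 1" for x :: nat
    using that by arith
  ultimately show ?thesis unfolding ncols_def by simp
qed

lemma partner_less_ncols: "j < ncols r \<Longrightarrow> partner j < ncols r"
  unfolding ncols_eq by (rule partner_less)

text \<open>A column \<open>j \<ge> 2\<close> of \<open>S (Suc r)\<close> is column \<open>a\<close> of block (ii) if \<open>\<not> e\<close>
  and of block (iii) if \<open>e\<close>.\<close>

lemma ncols_column_cases:
  assumes "j < ncols (Suc r)"
  obtains "j < 2" | e a where "a < ncols r" "j = 2 + of_bool e * ncols r + a"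
proof (cases "j < 2")
  case False
  show thesis
  proof (cases "j < 2 + ncols r")
    case True
    with False that(2)[of "j - 2" False] show thesis by simp
  next
    case False
    with \<open>\<not> j < 2\<close> assms that(2)[of "j - 2 - ncols r" True] show thesis by (simp add: ncols_Suc)
  qed
qed

fun S_entry :: "nat \<Rightarrow> nat \<Rightarrow> nat \<Rightarrow> real" where
  "S_entry 0 k j = of_bool (k = j)"
| "S_entry (Suc 0) k j = of_bool (k = j)"
| "S_entry (Suc (Suc m)) k j =
     (let n = 2^Suc m; c = ncols (Suc m) in
      if j < 2 then of_bool ((k < n) = (j = 0))
      else if j < 2 + c then S_entry (Suc m) (if k < n then k else k - n) (j - 2)
      else if k < n then S_entry (Suc m) k (j - 2 - c)
      else S_entry (Suc m) (k - n) (partner (j - 2 - c)))"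

lemma S_entry_upper_head:
  "k < 2^Suc m \<Longrightarrow> j < 2 \<Longrightarrow> S_entry (Suc (Suc m)) k j = of_bool (j = 0)"
  by simp

lemma S_entry_lower_head:
  "k < 2^Suc m \<Longrightarrow> j < 2 \<Longrightarrow> S_entry (Suc (Suc m)) (2^Suc m + k) j = of_bool (j = 1)"
  by auto

lemma S_entry_upper_tail:
  "k < 2^Suc m \<Longrightarrow> a < ncols (Suc m) \<Longrightarrow>
     S_entry (Suc (Suc m)) k (2 + of_bool e * ncols (Suc m) + a) = S_entry (Suc m) k a"
  by (cases e) (simp_all add: Let_def)

lemma S_entry_lower_tail:
  "k < 2^Suc m \<Longrightarrow> a < ncols (Suc m) \<Longrightarrow>
     S_entry (Suc (Suc m)) (2^Suc m + k) (2 + of_bool e * ncols (Suc m) + a)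
       = S_entry (Suc m) k (if e then partner a else a)"
  by (cases e) (simp_all add: Let_def)

lemma sum_lessThan_add:
  "(\<Sum>k<a + (b::nat). f k) = (\<Sum>k<a. f k) + (\<Sum>k<b. f (a + k))"
  by (induction b) (simp_all add: add.assoc)

lemma sum_lessThan_power2_Suc:
  "(\<Sum>k<(2::nat)^Suc n. f k) = (\<Sum>k<2^n. f k) + (\<Sum>k<2^n. f (2^n + k))"
  using sum_lessThan_add[of f "2^n" "2^n"] by (simp add: mult_2)

lemma S_entry_column_sum:
  "j < ncols (Suc m) \<Longrightarrow> (\<Sum>k<2^Suc m. S_entry (Suc m) k j) = 2^m"
proof (induction m arbitrary: j)
  case 0
  then have "j < 2" by (simp add: ncols_def)
  then show ?case by (simp add: of_bool_def)
next
  case (Suc m)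
  from Suc.prems show ?case
  proof (cases rule: ncols_column_cases)
    case 1
    then show ?thesis unfolding sum_lessThan_power2_Suc[where n = "Suc m"] by (simp add: S_entry_upper_head S_entry_lower_head)
  next
    case (2 e a)
    then have "(if e then partner a else a) < ncols (Suc m)" by (simp add: partner_less_ncols)
    with 2 Suc.IH[of a] Suc.IH[of "if e then partner a else a"] show ?thesis
      unfolding sum_lessThan_power2_Suc[where n = "Suc m"] by (cases e) (simp_all add: S_entry_upper_tail S_entry_lower_tail)
  qed
qed

text \<open>\<open>gram_entry m\<close> is the entry function of \<open>2^(r-2) (J + I \<otimes> K)\<close> for \<open>r = m + 1\<close>.\<close>

definition gram_entry :: "nat \<Rightarrow> nat \<Rightarrow> nat \<Rightarrow> real" where
  "gram_entry m i j = (if i = j then 2^m else if i div 2 = j div 2 then 0 else 2^m / 2)"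

lemma gram_entry_commute: "gram_entry m i j = gram_entry m j i"
  unfolding gram_entry_def by auto

lemma gram_entry_partner: "gram_entry m (partner i) (partner j) = gram_entry m i j"
proof -
  have "partner i = partner j \<longleftrightarrow> i = j" by (metis partner_partner)
  then show ?thesis by (simp add: gram_entry_def)
qed

lemma gram_entry_add_partner: "gram_entry m i j + gram_entry m i (partner j) = 2^m"
proof -
  consider "i = j" | "i = partner j" | "i div 2 \<noteq> j div 2" using div2_eq_iff by blast
  then show ?thesis
  proof cases
    case 1
    then show ?thesis using partner_neq[of j] by (simp add: gram_entry_def)
  next
    case 2
    then show ?thesis using partner_neq[of j] by (simp add: gram_entry_def)
  qed (simp add: gram_entry_def)
qed

lemma gram_entry_Suc_tail:
  assumes "a < ncols (Suc m)" "b < ncols (Suc m)"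
  shows "gram_entry (Suc m) (2 + of_bool e * ncols (Suc m) + a) (2 + of_bool f * ncols (Suc m) + b)
       = gram_entry m a b + gram_entry m (if e then partner a else a) (if f then partner b else b)"
proof -
  obtain h where c: "ncols (Suc m) = 2 * h" using ncols_eq by blast
  have div2: "(2 + of_bool e * (2 * h) + x) div 2 = 1 + of_bool e * h + x div 2" for e x
    by simp
  show ?thesis
  proof (cases "e = f")
    case True
    then show ?thesis
      unfolding c using div2 by (cases e) (simp_all add: gram_entry_partner, simp_all add: gram_entry_def)
  next
    case False
    have "(2 + of_bool e * (2 * h) + a) div 2 \<noteq> (2 + of_bool f * (2 * h) + b) div 2"
      using False assms unfolding div2 c by (cases e) auto
    then have "gram_entry (Suc m) (2 + of_bool e * ncols (Suc m) + a) (2 + of_bool f * ncols (Suc m) + b) = 2^m"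
      unfolding c gram_entry_def by auto
    moreover have "gram_entry m a b + gram_entry m (partner a) b = 2^m"
      using gram_entry_add_partner[of m b a] by (simp add: gram_entry_commute)
    ultimately show ?thesis using False gram_entry_add_partner[of m a b] by (cases e) simp_all
  qed
qed

lemma S_entry_column_inner_head:
  assumes "i < 2" "j < ncols (Suc (Suc m))"
  shows "(\<Sum>k<2^Suc (Suc m). S_entry (Suc (Suc m)) k i * S_entry (Suc (Suc m)) k j)
      = gram_entry (Suc m) i j"
  using assms(2)
proof (cases rule: ncols_column_cases)
  case 1
  with \<open>i < 2\<close> show ?thesis
    unfolding sum_lessThan_power2_Suc[where n = "Suc m"]
    by (auto simp: S_entry_upper_head S_entry_lower_head gram_entry_def)
next
  case (2 e a)
  then have "(if e then partner a else a) < ncols (Suc m)" by (simp add: partner_less_ncols)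
  moreover have "i div 2 \<noteq> j div 2" using \<open>i < 2\<close> 2 by auto
  ultimately show ?thesis
    using 2 \<open>i < 2\<close> S_entry_column_sum[of a m] S_entry_column_sum[of "if e then partner a else a" m]
    unfolding sum_lessThan_power2_Suc[where n = "Suc m"]
    by (cases "i = 0") (auto simp: S_entry_upper_head S_entry_lower_head S_entry_upper_tail
      S_entry_lower_tail gram_entry_def)
qed

lemma S_entry_column_inner:
  "i < ncols (Suc m) \<Longrightarrow> j < ncols (Suc m) \<Longrightarrow>
     (\<Sum>k<2^Suc m. S_entry (Suc m) k i * S_entry (Suc m) k j) = gram_entry m i j"
proof (induction m arbitrary: i j)
  case 0
  then have "i < 2" "j < 2" by (simp_all add: ncols_def)
  then show ?case by (auto simp: numeral_2_eq_2 less_Suc_eq lessThan_Suc gram_entry_def)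
next
  case (Suc m)
  from Suc.prems(1) show ?case
  proof (cases rule: ncols_column_cases)
    case 1
    with Suc.prems(2) show ?thesis by (intro S_entry_column_inner_head)
  next
    case (2 e a)
    from Suc.prems(2) show ?thesis
    proof (cases rule: ncols_column_cases)
      case 1
      then show ?thesis
        using S_entry_column_inner_head[OF 1 Suc.prems(1)] by (simp add: mult.commute gram_entry_commute)
    next
      case (2 f b)
      let ?a = "if e then partner a else a" and ?b = "if f then partner b else b"
      have "?a < ncols (Suc m)" "?b < ncols (Suc m)"
        using \<open>a < _\<close> \<open>b < _\<close> by (simp_all add: partner_less_ncols)
      then have "(\<Sum>k<2^Suc (Suc m). S_entry (Suc (Suc m)) k i * S_entry (Suc (Suc m)) k j)
          = gram_entry m a b + gram_entry m ?a ?b"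
        using \<open>a < _\<close> \<open>b < _\<close> Suc.IH[of a b] Suc.IH[of ?a ?b]
        unfolding sum_lessThan_power2_Suc[where n = "Suc m"] \<open>i = _\<close> \<open>j = _\<close>
        by (cases e; cases f) (simp_all add: S_entry_upper_tail S_entry_lower_tail)
      also have "\<dots> = gram_entry (Suc m) i j"
        unfolding \<open>i = _\<close> \<open>j = _\<close> using \<open>a < _\<close> \<open>b < _\<close> by (rule gram_entry_Suc_tail[symmetric])
      finally show ?thesis .
    qed
  qed
qed

lemma dim_hcat [simp]:
  "dim_row (hcat A B) = dim_row A" "dim_col (hcat A B) = dim_col A + dim_col B"
  unfolding hcat_def by simp_all

lemma index_hcat:
  "i < dim_row A \<Longrightarrow> j < dim_col A + dim_col B \<Longrightarrow>
     hcat A B $$ (i, j) = (if j < dim_col A then A $$ (i, j) else B $$ (i, j - dim_col A))"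
  unfolding hcat_def by simp

lemma dim_append_rows [simp]:
  "dim_row (A @\<^sub>r B) = dim_row A + dim_row B" "dim_col (A @\<^sub>r B) = dim_col A"
  unfolding append_rows_def by simp_all

lemma index_append_rows:
  "i < dim_row A + dim_row B \<Longrightarrow> j < dim_col A \<Longrightarrow>
     (A @\<^sub>r B) $$ (i, j) = (if i < dim_row A then A $$ (i, j) else B $$ (i - dim_row A, j))"
  unfolding append_rows_def by auto

lemma dim_Fm [simp]: "dim_row (Fm r) = ncols r" "dim_col (Fm r) = ncols r"
  unfolding Fm_def kron_def swap2_def ncols_eq by simp_all

lemma index_Fm:
  assumes "l < ncols r" "j < ncols r"
  shows "Fm r $$ (l, j) = of_bool (l = partner j)"
proof -
  have "l div 2 < 2^r - 1" "j div 2 < 2^r - 1"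
    using assms unfolding ncols_eq by auto
  moreover have "l div 2 = j div 2 \<Longrightarrow> l mod 2 = j mod 2 \<longleftrightarrow> l = j"
    by (metis div_mult_mod_eq)
  ultimately show ?thesis
    using assms unfolding Fm_def kron_def swap2_def ncols_eq eq_partner_iff by auto
qed

lemma mult_Fm: "mat n (ncols r) f * Fm r = mat n (ncols r) (\<lambda>(k, j). f (k, partner j))"
proof (rule eq_matI)
  fix i j assume "i < dim_row (mat n (ncols r) (\<lambda>(k, j). f (k, partner j)))"
    "j < dim_col (mat n (ncols r) (\<lambda>(k, j). f (k, partner j)))"
  then have i: "i < n" and j: "j < ncols r" by simp_all
  have "(mat n (ncols r) f * Fm r) $$ (i, j) = (\<Sum>l<ncols r. f (i, l) * of_bool (l = partner j))"
    using i j by (simp add: scalar_prod_def index_Fm lessThan_atLeast0)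
  also have "\<dots> = (\<Sum>l<ncols r. if l = partner j then f (i, l) else 0)"
    by (rule sum.cong) simp_all
  also have "\<dots> = f (i, partner j)"
    using partner_less_ncols[OF j] by simp
  finally show "(mat n (ncols r) f * Fm r) $$ (i, j) = mat n (ncols r) (\<lambda>(k, j). f (k, partner j)) $$ (i, j)"
    using i j by simp
qed simp_all

lemma S_eq: "S (Suc m) = mat (2^Suc m) (ncols (Suc m)) (\<lambda>(k, j). S_entry (Suc m) k j)"
proof (induction m)
  case 0
  show ?case by (rule eq_matI) (auto simp: ncols_def)
next
  case (Suc m)
  have "(2::nat)^Suc (Suc m) = 2^Suc m + 2^Suc m" by simp
  then show ?case
    unfolding S.simps(3) Let_def Suc.IH mult_Fm
    by (intro eq_matI) (auto simp: index_hcat index_append_rows ncols_Suc ones_col_def zeros_col_def Jmat_def numeral_2_eq_2)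
qed

lemma index_Gram_S:
  assumes "i < ncols (Suc m)" "j < ncols (Suc m)"
  shows "(transpose_mat (S (Suc m)) * S (Suc m)) $$ (i, j) = gram_entry m i j"
  using assms S_entry_column_inner[OF assms]
  by (simp add: S_eq scalar_prod_def lessThan_atLeast0)

lemma index_gram_matrix:
  assumes "i < 2 * h" "j < 2 * h"
  shows "((2^m / 2) \<cdot>\<^sub>m (Jmat (2 * h) (2 * h) + kron (1\<^sub>m h) K2)) $$ (i, j) = gram_entry m i j"
proof -
  have "i div 2 < h" "j div 2 < h" using assms by linarith+
  moreover have "i div 2 = j div 2 \<Longrightarrow> i mod 2 = j mod 2 \<longleftrightarrow> i = j"
    by (metis div_mult_mod_eq)
  ultimately show ?thesis
    using assms by (auto simp: kron_def K2_def Jmat_def gram_entry_def)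
qed

lemma powi_two_Suc_minus_two: "(2::real) powi (int (Suc m) - 2) = 2^m / 2"
proof (cases m)
  case (Suc k)
  then have "int (Suc m) - 2 = int k" by simp
  then have "(2::real) powi (int (Suc m) - 2) = 2^k" by simp
  with Suc show ?thesis by simp
qed (simp add: power_int_def)

lemma Gram_S:
  assumes "ncols (Suc m) = 2 * h"
  shows "transpose_mat (S (Suc m)) * S (Suc m)
           = (2^m / 2) \<cdot>\<^sub>m (Jmat (2 * h) (2 * h) + kron (1\<^sub>m h) K2)"
proof (rule eq_matI)
  fix i j assume "i < dim_row ((2^m / 2) \<cdot>\<^sub>m (Jmat (2 * h) (2 * h) + kron (1\<^sub>m h) K2))"
    "j < dim_col ((2^m / 2) \<cdot>\<^sub>m (Jmat (2 * h) (2 * h) + kron (1\<^sub>m h) K2))"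
  then have "i < 2 * h" "j < 2 * h" by (simp_all add: Jmat_def kron_def K2_def)
  with assms show "(transpose_mat (S (Suc m)) * S (Suc m)) $$ (i, j)
      = ((2^m / 2) \<cdot>\<^sub>m (Jmat (2 * h) (2 * h) + kron (1\<^sub>m h) K2)) $$ (i, j)"
    by (simp add: index_Gram_S index_gram_matrix)
qed (simp_all add: S_eq Jmat_def kron_def K2_def assms)

theorem lemma4p3:
  fixes r c :: nat
  assumes "r \<ge> 1" and "c = 2^(r+1) - 2"
  shows "transpose_mat (S r) * S r
           = ((2::real) powi (int r - 2)) \<cdot>\<^sub>m (Jmat c c + kron (1\<^sub>m (c div 2)) K2)"
proof -
  obtain m where r: "r = Suc m" using assms(1) by (cases r) auto
  have c: "c = ncols (Suc m)" using assms(2) r by (simp add: ncols_def)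
  obtain h where h: "c = 2 * h" using c ncols_eq by blast
  with c have "ncols (Suc m) = 2 * h" by simp
  then show ?thesis
    unfolding r powi_two_Suc_minus_two h by (simp add: Gram_S)
qed

end
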